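(* Let $G$ be a graph with $n$ vertices and $m\ge 1$ edges. Then $$EE(G) > e^{R_{1/2}/m} + (n-1) - \frac{R_{1/2}}{m},$$ where $R_{1/2}=R_{1/2}(G)$.
   Context: All graphs are finite, simple and undirected. For a graph $G$ with adjacency matrix $A(G)$ having eigenvalues $\lambda_1\ge\cdots\ge\lambda_n$, the Estrada index is $EE(G)=\sum_{i=1}^n e^{\lambda_i}$. Writing $d(i)$ for the degree of vertex $i$ and $\mathcal{E}(G)$ for the edge set, $R_\alpha(G)=\sum_{ij\in\mathcal{E}(G)}(d(i)d(j))^\alpha$; in particular $R_{1/2}(G)=\sum_{ij\in\mathcal{E}(G)}\sqrt{d(i)d(j)}$. *)

theory Defs
  imports Complex_Main "Jordan_Normal_Form.Char_Poly"
begin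

definition simple_graph :: "nat \<Rightarrow> (nat \<Rightarrow> nat \<Rightarrow> bool) \<Rightarrow> bool" where
  "simple_graph n E \<longleftrightarrow> (\<forall>i j. E i j \<longrightarrow> i < n \<and> j < n \<and> i \<noteq> j \<and> E j i)"

definition edges :: "nat \<Rightarrow> (nat \<Rightarrow> nat \<Rightarrow> bool) \<Rightarrow> (nat \<times> nat) set" where
  "edges n E = {(i, j). i < j \<and> j < n \<and> E i j}"

definition degree :: "nat \<Rightarrow> (nat \<Rightarrow> nat \<Rightarrow> bool) \<Rightarrow> nat \<Rightarrow> nat" where
  "degree n E i = card {j. j < n \<and> E i j}"

definition adj_matrix :: "nat \<Rightarrow> (nat \<Rightarrow> nat \<Rightarrow> bool) \<Rightarrow> real mat" where
  "adj_matrix n E = mat n n (\<lambda>(i, j). if E i j then 1 else 0)"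

definition adj_eigenvalues :: "nat \<Rightarrow> (nat \<Rightarrow> nat \<Rightarrow> bool) \<Rightarrow> real multiset" where
  "adj_eigenvalues n E = proots (char_poly (adj_matrix n E))"

definition estrada_index :: "nat \<Rightarrow> (nat \<Rightarrow> nat \<Rightarrow> bool) \<Rightarrow> real" where
  "estrada_index n E = (\<Sum>x\<in>#adj_eigenvalues n E. exp x)"

definition randic_half :: "nat \<Rightarrow> (nat \<Rightarrow> nat \<Rightarrow> bool) \<Rightarrow> real" where
  "randic_half n E = (\<Sum>(i, j)\<in>edges n E. sqrt (real (degree n E i * degree n E j)))"

end

theory Submission
  imports Defs "Jordan_Normal_Form.Schur_Decomposition"
begin

text \<open>Put \<open>x\<^sub>i = sqrt (d i)\<close>. Then \<open>x\<^sup>T A x = 2 R\<^sub>1\<^sub>/\<^sub>2\<close> and \<open>x\<^sup>T x = 2 m\<close>, so the largest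
  adjacency eigenvalue satisfies \<open>\<lambda>\<^sub>1 \<ge> R\<^sub>1\<^sub>/\<^sub>2 / m > 0\<close>. As \<open>tr A = 0\<close>, the remaining
  eigenvalues sum to \<open>-\<lambda>\<^sub>1\<close> and are not all zero, so \<open>e\<^sup>t \<ge> 1 + t\<close>, strict for \<open>t \<noteq> 0\<close>,
  gives \<open>(\<Sum>i\<ge>2. exp \<lambda>\<^sub>i) > n - 1 - \<lambda>\<^sub>1\<close>. Finally \<open>e\<^sup>t - t\<close> is increasing for \<open>t \<ge> 0\<close>.

  As no spectral theorem is at hand, \<open>\<lambda>\<^sub>1 \<ge> x\<^sup>T A x / x\<^sup>T x\<close> is obtained from traces: for a
  shift \<open>M = A + c I\<close> with nonnegative spectrum and Rayleigh quotient \<open>s\<close>, repeated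
  Cauchy--Schwarz yields \<open>s ^ 2\<^sup>k \<le> tr (M ^ 2\<^sup>k)\<close>, while a Schur triangularization gives
  \<open>tr (M ^ 2\<^sup>k) = (\<Sum>i. (\<lambda>\<^sub>i + c) ^ 2\<^sup>k) \<le> n (\<lambda>\<^sub>1 + c) ^ 2\<^sup>k\<close>.\<close>

section \<open>Traces of triangularizable matrices\<close>

definition trace :: "'a::comm_monoid_add mat \<Rightarrow> 'a" where
  "trace A = (\<Sum>i<dim_row A. A $$ (i, i))"

lemma trace_mult_comm:
  fixes A :: "'a::comm_semiring_0 mat"
  assumes "A \<in> carrier_mat n m" "B \<in> carrier_mat m n"
  shows "trace (A * B) = trace (B * A)"
proof -
  have "trace (A * B) = (\<Sum>i<n. \<Sum>k<m. A $$ (i, k) * B $$ (k, i))"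
    using assms by (simp add: trace_def scalar_prod_def atLeast0LessThan)
  also have "\<dots> = (\<Sum>k<m. \<Sum>i<n. B $$ (k, i) * A $$ (i, k))"
    by (subst sum.swap) (simp add: mult.commute)
  also have "\<dots> = trace (B * A)"
    using assms by (simp add: trace_def scalar_prod_def atLeast0LessThan)
  finally show ?thesis .
qed

lemma trace_similar:
  fixes A :: "'a::comm_ring_1 mat"
  assumes "similar_mat_wit A B P Q" "A \<in> carrier_mat n n"
  shows "trace A = trace B"
proof -
  from similar_mat_witD2[OF assms(2,1)]
  have AB: "A = P * B * Q" "Q * P = 1\<^sub>m n"
    and carr: "P \<in> carrier_mat n n" "B \<in> carrier_mat n n" "Q \<in> carrier_mat n n"
    by auto
  have "trace A = trace (P * (B * Q))" using AB carr by (simp add: assoc_mult_mat[of P n n B n Q n])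
  also have "\<dots> = trace ((B * Q) * P)" using carr by (intro trace_mult_comm) auto
  also have "\<dots> = trace B" using AB carr by (simp add: assoc_mult_mat[of B n n Q n P n])
  finally show ?thesis .
qed

lemma upper_triangular_mult_entry:
  fixes B C :: "'a::semiring_0 mat"
  assumes B: "B \<in> carrier_mat n n" "upper_triangular B"
    and C: "C \<in> carrier_mat n n" "upper_triangular C"
    and ij: "j \<le> i" "i < n"
  shows "(B * C) $$ (i, j) = (if i = j then B $$ (i, i) * C $$ (i, i) else 0)"
proof -
  have vanish: "B $$ (i, k) * C $$ (k, j) = 0" if "k < n" "k \<noteq> i" for k
  proof (cases "k < i")
    case True
    then show ?thesis using upper_triangularD[OF B(2) True] B ij by simp
  next
    case False
    then have "j < k" using that ij by linarith
    then show ?thesis using upper_triangularD[OF C(2) \<open>j < k\<close>] C that by simp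
  qed
  have "(B * C) $$ (i, j) = (\<Sum>k\<in>{0..<n}. B $$ (i, k) * C $$ (k, j))"
    using B C ij by (simp add: scalar_prod_def)
  also have "\<dots> = B $$ (i, i) * C $$ (i, j)"
    using ij by (subst sum.remove[of _ i]) (auto simp: vanish intro!: sum.neutral)
  finally show ?thesis using upper_triangularD[OF C(2), of j i] C ij by auto
qed

lemma upper_triangular_pow:
  fixes B :: "'a::semiring_1 mat"
  assumes B: "B \<in> carrier_mat n n" "upper_triangular B"
  shows "upper_triangular (B ^\<^sub>m k) \<and> (\<forall>i<n. (B ^\<^sub>m k) $$ (i, i) = B $$ (i, i) ^ k)"
proof (induction k)
  case 0
  then show ?case using B by auto
next
  case (Suc k)
  then have IH: "upper_triangular (B ^\<^sub>m k)" "\<And>i. i < n \<Longrightarrow> (B ^\<^sub>m k) $$ (i, i) = B $$ (i, i) ^ k"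
    by auto
  have "(B ^\<^sub>m k * B) $$ (i, j) = (if i = j then B $$ (i, i) ^ Suc k else 0)"
    if "j \<le> i" "i < n" for i j
    using upper_triangular_mult_entry[OF pow_carrier_mat[OF B(1)] IH(1) B that] IH(2) that
    by (simp add: power_commutes)
  then show ?case using B by (auto intro!: upper_triangularI)
qed

lemma trace_pow_upper_triangular:
  fixes B :: "'a::comm_semiring_1 mat"
  assumes "B \<in> carrier_mat n n" "upper_triangular B"
  shows "trace (B ^\<^sub>m k) = (\<Sum>i<n. B $$ (i, i) ^ k)"
  using upper_triangular_pow[OF assms] assms(1) by (simp add: trace_def)

lemma similar_mat_wit_add_smult_one:
  fixes A :: "'a::comm_ring_1 mat"
  assumes sim: "similar_mat_wit A B P Q" and A: "A \<in> carrier_mat n n"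
  shows "similar_mat_wit (A + c \<cdot>\<^sub>m 1\<^sub>m n) (B + c \<cdot>\<^sub>m 1\<^sub>m n) P Q"
proof -
  note wit = similar_mat_witD2[OF A sim]
  have "P * (c \<cdot>\<^sub>m 1\<^sub>m n) = c \<cdot>\<^sub>m P"
    using mult_smult_distrib[OF wit(6) one_carrier_mat] wit(6) by simp
  then have "P * (B + c \<cdot>\<^sub>m 1\<^sub>m n) * Q = (P * B + c \<cdot>\<^sub>m P) * Q"
    using wit by (simp add: mult_add_distrib_mat[of P n n])
  also have "\<dots> = P * B * Q + c \<cdot>\<^sub>m (P * Q)"
    using wit by (simp add: add_mult_distrib_mat[of _ n n] mult_smult_assoc_mat[of P n n])
  also have "\<dots> = A + c \<cdot>\<^sub>m 1\<^sub>m n" using wit by simp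
  finally have "A + c \<cdot>\<^sub>m 1\<^sub>m n = P * (B + c \<cdot>\<^sub>m 1\<^sub>m n) * Q" ..
  then show ?thesis using wit unfolding similar_mat_wit_def Let_def by auto
qed

lemma trace_shifted_pow:
  fixes A :: "'a::conjugatable_ordered_field mat"
  assumes A: "A \<in> carrier_mat n n" and cp: "char_poly A = (\<Prod>a\<leftarrow>es. [:-a, 1:])"
    and len: "length es = n"
  shows "trace ((A + c \<cdot>\<^sub>m 1\<^sub>m n) ^\<^sub>m k) = (\<Sum>i<n. (es ! i + c) ^ k)"
proof -
  obtain B P Q where schur: "schur_decomposition A es = (B, P, Q)"
    by (cases "schur_decomposition A es") auto
  from schur_decomposition[OF A cp schur]
  have sim: "similar_mat_wit A B P Q" and ut: "upper_triangular B" and diag: "diag_mat B = es"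
    by auto
  have B: "B \<in> carrier_mat n n" using similar_mat_witD2[OF A sim] by auto
  let ?B = "B + c \<cdot>\<^sub>m 1\<^sub>m n"
  have B': "?B \<in> carrier_mat n n" "upper_triangular ?B"
    using B upper_triangularD[OF ut] by (auto intro!: upper_triangularI)
  have simk: "similar_mat_wit ((A + c \<cdot>\<^sub>m 1\<^sub>m n) ^\<^sub>m k) (?B ^\<^sub>m k) P Q"
    by (rule similar_mat_wit_pow[OF similar_mat_wit_add_smult_one[OF sim A]])
  have "trace ((A + c \<cdot>\<^sub>m 1\<^sub>m n) ^\<^sub>m k) = trace (?B ^\<^sub>m k)"
    using A by (intro trace_similar[OF simk]) auto
  also have "\<dots> = (\<Sum>i<n. ?B $$ (i, i) ^ k)" by (rule trace_pow_upper_triangular[OF B'])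
  also have "\<dots> = (\<Sum>i<n. (es ! i + c) ^ k)"
    using B diag by (intro sum.cong) (auto simp: diag_mat_def)
  finally show ?thesis .
qed

lemma trace_eq_sum_roots:
  fixes A :: "'a::conjugatable_ordered_field mat"
  assumes "A \<in> carrier_mat n n" "char_poly A = (\<Prod>a\<leftarrow>es. [:-a, 1:])" "length es = n"
  shows "trace A = (\<Sum>i<n. es ! i)"
proof -
  have "A + 0 \<cdot>\<^sub>m 1\<^sub>m n = A" using assms(1) by (intro eq_matI) auto
  then show ?thesis using trace_shifted_pow[OF assms, of 0 1] assms(1) by simp
qed

section \<open>Rayleigh quotients and the largest eigenvalue\<close>

lemma Cauchy_Schwarz_sum:
  fixes a b :: "'i \<Rightarrow> 'a::linordered_field"
  shows "(\<Sum>i\<in>I. a i * b i)\<^sup>2 \<le> (\<Sum>i\<in>I. (a i)\<^sup>2) * (\<Sum>i\<in>I. (b i)\<^sup>2)"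
proof -
  have "0 \<le> (\<Sum>i\<in>I. \<Sum>j\<in>I. (a i * b j - a j * b i)\<^sup>2)"
    by (intro sum_nonneg) simp
  also have "\<dots> = (\<Sum>i\<in>I. \<Sum>j\<in>I. (a i)\<^sup>2 * (b j)\<^sup>2) + (\<Sum>i\<in>I. \<Sum>j\<in>I. (b i)\<^sup>2 * (a j)\<^sup>2)
      - 2 * (\<Sum>i\<in>I. \<Sum>j\<in>I. (a i * b i) * (a j * b j))"
    by (simp add: power2_eq_square algebra_simps sum_subtractf sum.distrib sum_distrib_left)
  also have "\<dots> = 2 * ((\<Sum>i\<in>I. (a i)\<^sup>2) * (\<Sum>i\<in>I. (b i)\<^sup>2) - (\<Sum>i\<in>I. a i * b i)\<^sup>2)"
    by (simp only: sum_product[symmetric]) (simp add: power2_eq_square algebra_simps)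
  finally show ?thesis by simp
qed

lemma pow_mat_add:
  fixes A :: "'a::semiring_1 mat"
  assumes A: "A \<in> carrier_mat n n"
  shows "A ^\<^sub>m (k + l) = A ^\<^sub>m k * A ^\<^sub>m l"
proof (induction l)
  case 0
  show ?case using A by simp
next
  case (Suc l)
  then show ?case using A by (simp add: assoc_mult_mat[of _ n n _ n _ n])
qed

lemma transpose_pow_mat_symmetric:
  fixes A :: "'a::comm_semiring_1 mat"
  assumes A: "A \<in> carrier_mat n n" and sym: "transpose_mat A = A"
  shows "transpose_mat (A ^\<^sub>m k) = A ^\<^sub>m k"
proof (induction k)
  case 0
  show ?case using A by simp
next
  case (Suc k)
  have "transpose_mat (A ^\<^sub>m Suc k) = A * A ^\<^sub>m k"
    using Suc A sym by (simp add: transpose_mult[of _ n n])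
  also have "\<dots> = A ^\<^sub>m (1 + k)" using pow_mat_add[OF A, of 1 k] A by simp
  finally show ?case by simp
qed

lemma symmetric_mat_entry:
  assumes "A \<in> carrier_mat n n" "transpose_mat A = A" "i < n" "j < n"
  shows "A $$ (i, j) = A $$ (j, i)"
  using arg_cong[OF assms(2), of "\<lambda>M. M $$ (j, i)"] assms(1,3,4) by simp

definition quad_form :: "nat \<Rightarrow> real mat \<Rightarrow> (nat \<Rightarrow> real) \<Rightarrow> real" where
  "quad_form n M x = (\<Sum>i<n. \<Sum>j<n. x i * M $$ (i, j) * x j)"

lemma quad_form_eq_sum_mult_row:
  "quad_form n M x = (\<Sum>i<n. x i * (\<Sum>j<n. M $$ (i, j) * x j))"
  unfolding quad_form_def by (simp add: sum_distrib_left mult.assoc)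

lemma quad_form_mult_self:
  assumes K: "K \<in> carrier_mat n n" and sym: "transpose_mat K = K"
  shows "quad_form n (K * K) x = (\<Sum>l<n. (\<Sum>j<n. K $$ (l, j) * x j)\<^sup>2)"
proof -
  have "x i * (K * K) $$ (i, j) * x j = (\<Sum>l<n. (K $$ (l, i) * x i) * (K $$ (l, j) * x j))"
    if "i < n" "j < n" for i j
  proof -
    have "(K * K) $$ (i, j) = (\<Sum>l<n. K $$ (l, i) * K $$ (l, j))"
      using K that symmetric_mat_entry[OF K sym that(1)]
      by (simp add: scalar_prod_def atLeast0LessThan)
    then show ?thesis by (simp add: sum_distrib_left sum_distrib_right mult_ac)
  qed
  then have "quad_form n (K * K) x
      = (\<Sum>i<n. \<Sum>j<n. \<Sum>l<n. (K $$ (l, i) * x i) * (K $$ (l, j) * x j))"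
    unfolding quad_form_def by (intro sum.cong refl) simp
  also have "\<dots> = (\<Sum>i<n. \<Sum>l<n. \<Sum>j<n. (K $$ (l, i) * x i) * (K $$ (l, j) * x j))"
    by (rule sum.cong[OF refl], rule sum.swap)
  also have "\<dots> = (\<Sum>l<n. \<Sum>i<n. \<Sum>j<n. (K $$ (l, i) * x i) * (K $$ (l, j) * x j))"
    by (rule sum.swap)
  also have "\<dots> = (\<Sum>l<n. (\<Sum>j<n. K $$ (l, j) * x j)\<^sup>2)"
    by (simp only: sum_product[symmetric] power2_eq_square)
  finally show ?thesis .
qed

lemma quad_form_square_le:
  assumes K: "K \<in> carrier_mat n n" and sym: "transpose_mat K = K"
  shows "(quad_form n K x)\<^sup>2 \<le> (\<Sum>i<n. (x i)\<^sup>2) * quad_form n (K * K) x"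
proof -
  have "quad_form n K x = (\<Sum>i<n. x i * (\<Sum>j<n. K $$ (i, j) * x j))"
    by (rule quad_form_eq_sum_mult_row)
  then show ?thesis unfolding quad_form_mult_self[OF K sym] by (simp only: Cauchy_Schwarz_sum)
qed

lemma quad_form_mult_self_le_trace:
  assumes K: "K \<in> carrier_mat n n" and sym: "transpose_mat K = K"
  shows "quad_form n (K * K) x \<le> (\<Sum>i<n. (x i)\<^sup>2) * trace (K * K)"
proof -
  have "quad_form n (K * K) x \<le> (\<Sum>l<n. (\<Sum>j<n. (K $$ (l, j))\<^sup>2) * (\<Sum>j<n. (x j)\<^sup>2))"
    unfolding quad_form_mult_self[OF K sym] by (intro sum_mono Cauchy_Schwarz_sum)
  also have "\<dots> = (\<Sum>l<n. \<Sum>j<n. (K $$ (l, j))\<^sup>2) * (\<Sum>j<n. (x j)\<^sup>2)"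
    by (rule sum_distrib_right[symmetric])
  also have "(\<Sum>l<n. \<Sum>j<n. (K $$ (l, j))\<^sup>2) = trace (K * K)"
    using K symmetric_mat_entry[OF K sym]
    by (auto simp: trace_def scalar_prod_def atLeast0LessThan power2_eq_square intro!: sum.cong)
  finally show ?thesis by (simp only: mult.commute)
qed

lemma quad_form_pow_lower_bound:
  assumes M: "M \<in> carrier_mat n n" and sym: "transpose_mat M = M"
    and ray: "quad_form n M x = s * (\<Sum>i<n. (x i)\<^sup>2)" and s: "0 \<le> s"
    and x: "0 < (\<Sum>i<n. (x i)\<^sup>2)"
  shows "s ^ (2 ^ j) * (\<Sum>i<n. (x i)\<^sup>2) \<le> quad_form n (M ^\<^sub>m (2 ^ j)) x"
proof (induction j)
  case 0
  show ?case using ray M by simp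
next
  case (Suc j)
  let ?K = "M ^\<^sub>m (2 ^ j)" and ?N = "\<Sum>i<n. (x i)\<^sup>2"
  have K: "?K \<in> carrier_mat n n" "transpose_mat ?K = ?K"
    using M transpose_pow_mat_symmetric[OF M sym] by auto
  have "?N * (s ^ (2 ^ Suc j) * ?N) = (s ^ (2 ^ j) * ?N)\<^sup>2"
    by (simp add: power2_eq_square power_mult_distrib power_add mult_2 mult_ac)
  also have "\<dots> \<le> (quad_form n ?K x)\<^sup>2"
    using Suc.IH s x by (intro power_mono) simp_all
  also have "\<dots> \<le> ?N * quad_form n (?K * ?K) x" by (rule quad_form_square_le[OF K])
  finally have "?N * (s ^ (2 ^ Suc j) * ?N) \<le> ?N * quad_form n (?K * ?K) x" .
  moreover have "?K * ?K = M ^\<^sub>m (2 ^ Suc j)" using pow_mat_add[OF M] by (simp add: mult_2)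
  ultimately show ?case using x by (simp add: mult_le_cancel_left)
qed

lemma trace_pow_lower_bound:
  assumes M: "M \<in> carrier_mat n n" and sym: "transpose_mat M = M"
    and ray: "quad_form n M x = s * (\<Sum>i<n. (x i)\<^sup>2)" and s: "0 \<le> s"
    and x: "0 < (\<Sum>i<n. (x i)\<^sup>2)"
  shows "s ^ (2 ^ Suc j) \<le> trace (M ^\<^sub>m (2 ^ Suc j))"
proof -
  let ?K = "M ^\<^sub>m (2 ^ j)" and ?N = "\<Sum>i<n. (x i)\<^sup>2"
  have K: "?K \<in> carrier_mat n n" "transpose_mat ?K = ?K"
    using M transpose_pow_mat_symmetric[OF M sym] by auto
  have KK: "?K * ?K = M ^\<^sub>m (2 ^ Suc j)" using pow_mat_add[OF M] by (simp add: mult_2)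
  have "s ^ (2 ^ Suc j) * ?N \<le> quad_form n (?K * ?K) x"
    using quad_form_pow_lower_bound[OF M sym ray s x, of "Suc j"] by (simp only: KK)
  also have "\<dots> \<le> ?N * trace (?K * ?K)" by (rule quad_form_mult_self_le_trace[OF K])
  finally show ?thesis using x by (simp add: KK mult.commute)
qed

lemma le_of_pow_le_const_mult_pow:
  fixes s \<nu> C :: real
  assumes "0 \<le> \<nu>" "0 < C" and pow_le: "\<And>k. \<exists>N\<ge>k. s ^ N \<le> C * \<nu> ^ N"
  shows "s \<le> \<nu>"
proof (rule ccontr)
  assume "\<not> s \<le> \<nu>"
  then have s: "\<nu> < s" "0 < s" using assms(1) by auto
  define q where "q = \<nu> / s"
  have q: "0 \<le> q" "q < 1" using s assms(1) by (auto simp: q_def)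
  obtain k where k: "q ^ k < 1 / C" using real_arch_pow_inv[of "1 / C" q] q assms(2) by auto
  obtain N where N: "k \<le> N" "s ^ N \<le> C * \<nu> ^ N" using pow_le by blast
  have "1 \<le> C * q ^ N" using N(2) s by (simp add: q_def power_divide field_simps)
  also have "\<dots> \<le> C * q ^ k" using q N(1) assms(2) by (simp add: power_decreasing)
  finally show False using k assms(2) by (simp add: field_simps)
qed

lemma quad_form_add_smult_one:
  assumes "A \<in> carrier_mat n n"
  shows "quad_form n (A + c \<cdot>\<^sub>m 1\<^sub>m n) x = quad_form n A x + c * (\<Sum>i<n. (x i)\<^sup>2)"
proof -
  have "quad_form n (A + c \<cdot>\<^sub>m 1\<^sub>m n) x
      = (\<Sum>i<n. \<Sum>j<n. x i * A $$ (i, j) * x j + (if i = j then c * (x i)\<^sup>2 else 0))"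
    unfolding quad_form_def using assms
    by (intro sum.cong refl) (auto simp: algebra_simps power2_eq_square)
  then show ?thesis by (simp add: quad_form_def sum.distrib sum_distrib_left)
qed

lemma exists_eigenvalue_ge_rayleigh_quotient:
  assumes A: "A \<in> carrier_mat n n" and sym: "transpose_mat A = A"
    and cp: "char_poly A = (\<Prod>a\<leftarrow>es. [:-a, 1:])" and len: "length es = n"
    and ray: "quad_form n A x = r * (\<Sum>i<n. (x i)\<^sup>2)" and x: "0 < (\<Sum>i<n. (x i)\<^sup>2)"
  shows "\<exists>k<n. r \<le> es ! k"
proof -
  have n: "0 < n" using x by (cases n) auto
  text \<open>After the shift by \<open>c\<close> the Rayleigh quotient and all eigenvalues are nonnegative,
    so comparing even powers compares the numbers themselves.\<close>
  define c where "c = \<bar>r\<bar> + (\<Sum>i<n. \<bar>es ! i\<bar>)"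
  have shift_nonneg: "0 \<le> es ! i + c" if "i < n" for i
    using member_le_sum[of i "{..<n}" "\<lambda>i. \<bar>es ! i\<bar>"] that by (auto simp: c_def)
  let ?M = "A + c \<cdot>\<^sub>m 1\<^sub>m n"
  have M: "?M \<in> carrier_mat n n" "transpose_mat ?M = ?M"
    using A by (auto intro!: eq_matI simp: symmetric_mat_entry[OF A sym])
  have rayM: "quad_form n ?M x = (r + c) * (\<Sum>i<n. (x i)\<^sup>2)"
    using quad_form_add_smult_one[OF A] ray by (simp add: algebra_simps)
  have "0 \<le> (\<Sum>i<n. \<bar>es ! i\<bar>)" by (simp add: sum_nonneg)
  then have s: "0 \<le> r + c" using abs_ge_minus_self[of r] unfolding c_def by linarith
  obtain k where k: "k < n" "es ! k = Max (set es)"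
    using Max_in[of "set es"] n len by (auto simp: in_set_conv_nth)
  have max: "es ! i \<le> es ! k" if "i < n" for i using k(2) that len by simp
  have "r + c \<le> es ! k + c"
  proof (rule le_of_pow_le_const_mult_pow)
    show "0 \<le> es ! k + c" by (rule shift_nonneg[OF k(1)])
    show "0 < real n" using n by simp
    fix j
    have "(r + c) ^ (2 ^ Suc j) \<le> trace (?M ^\<^sub>m (2 ^ Suc j))"
      by (rule trace_pow_lower_bound[OF M rayM s x])
    also have "\<dots> = (\<Sum>i<n. (es ! i + c) ^ (2 ^ Suc j))" by (rule trace_shifted_pow[OF A cp len])
    also have "\<dots> \<le> (\<Sum>i<n. (es ! k + c) ^ (2 ^ Suc j))"
      using max shift_nonneg by (intro sum_mono power_mono) auto
    finally have "(r + c) ^ (2 ^ Suc j) \<le> real n * (es ! k + c) ^ (2 ^ Suc j)" by simp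
    moreover have "j \<le> 2 ^ Suc j" using less_exp[of j] by (simp, linarith)
    ultimately show "\<exists>N\<ge>j. (r + c) ^ N \<le> real n * (es ! k + c) ^ N" by blast
  qed
  then show ?thesis using k(1) by auto
qed

section \<open>Real spectrum of symmetric matrices\<close>

lemma eigenvalue_real_symmetric_is_real:
  fixes A :: "real mat"
  assumes A: "A \<in> carrier_mat n n" and sym: "transpose_mat A = A"
    and ev: "eigenvector (map_mat complex_of_real A) v a"
  shows "Im a = 0"
proof -
  have v: "v \<in> carrier_vec n" "v \<noteq> 0\<^sub>v n" "map_mat complex_of_real A *\<^sub>v v = a \<cdot>\<^sub>v v"
    using ev A by (auto simp: eigenvector_def)
  have row: "(\<Sum>j<n. of_real (A $$ (i, j)) * v $ j) = a * v $ i" if "i < n" for i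
    using arg_cong[OF v(3), of "\<lambda>w. w $ i"] that A v(1)
    by (simp add: scalar_prod_def atLeast0LessThan)
  define S where "S = (\<Sum>i<n. \<Sum>j<n. cnj (v $ i) * of_real (A $$ (i, j)) * v $ j)"
  define N where "N = (\<Sum>i<n. (cmod (v $ i))\<^sup>2)"
  have "S = (\<Sum>i<n. cnj (v $ i) * (a * v $ i))"
    unfolding S_def by (simp add: row mult.assoc flip: sum_distrib_left)
  also have "\<dots> = (\<Sum>i<n. a * of_real ((cmod (v $ i))\<^sup>2))"
    by (intro sum.cong refl) (simp only: complex_norm_square, simp add: mult_ac)
  also have "\<dots> = a * of_real N" by (simp add: N_def sum_distrib_left)
  finally have S_eq: "S = a * of_real N" .
  have "cnj S = (\<Sum>j<n. \<Sum>i<n. cnj (v $ j) * of_real (A $$ (j, i)) * v $ i)"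
    unfolding S_def
    by (subst sum.swap) (simp add: symmetric_mat_entry[OF A sym] mult_ac)
  then have "cnj S = S" by (simp add: S_def)
  then have "Im S = 0" by (metis cnj.sel(2) neg_equal_zero)
  then have "Im a * N = 0" using S_eq by simp
  moreover obtain i where "i < n" "v $ i \<noteq> 0"
    using v(1,2) by (metis eq_vecI carrier_vecD index_zero_vec)
  then have "0 < N" unfolding N_def by (intro sum_pos2[of _ i]) auto
  ultimately show ?thesis by simp
qed

lemma char_poly_real_symmetric_splits:
  fixes A :: "real mat"
  assumes A: "A \<in> carrier_mat n n" and sym: "transpose_mat A = A"
  obtains es where "length es = n" "char_poly A = (\<Prod>a\<leftarrow>es. [:-a, 1:])"
proof -
  interpret R: map_poly_inj_comm_ring_hom complex_of_real ..
  let ?M = "map_mat complex_of_real A"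
  have M: "?M \<in> carrier_mat n n" using A by simp
  obtain as where as: "char_poly ?M = (\<Prod>a\<leftarrow>as. [:-a, 1:])" "length as = n"
    using char_poly_factorized[OF M] by blast
  have real: "of_real (Re a) = a" if "a \<in> set as" for a
  proof -
    have "poly (char_poly ?M) a = 0"
      using that by (simp add: as(1) poly_prod_list prod_list_zero_iff)
    then obtain v where "eigenvector ?M v a"
      using eigenvalue_root_char_poly[OF M] by (auto simp: eigenvalue_def)
    then show ?thesis
      using eigenvalue_real_symmetric_is_real[OF A sym] by (simp add: complex_eq_iff)
  qed
  have "map_poly complex_of_real (char_poly A) = char_poly ?M"
    by (rule of_real_hom.char_poly_hom[OF A, symmetric])
  also have "\<dots> = (\<Prod>a\<leftarrow>as. [:-a, 1:])" by (rule as(1))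
  also have "\<dots> = map_poly complex_of_real (\<Prod>a\<leftarrow>map Re as. [:-a, 1:])"
    by (simp add: R.hom_prod_list o_def real cong: map_cong)
  finally have "char_poly A = (\<Prod>a\<leftarrow>map Re as. [:-a, 1:])" by (rule R.injectivity)
  then show ?thesis using as(2) by (intro that[of "map Re as"]) (simp_all add: o_def)
qed

lemma proots_prod_list_linear:
  "proots (\<Prod>a\<leftarrow>es. [:-a, 1:]) = mset (es :: 'a::idom list)"
proof (induction es)
  case (Cons a es)
  have "(\<Prod>a\<leftarrow>es. [:-a, 1:]) \<noteq> 0" by (auto simp: prod_list_zero_iff)
  then show ?case using Cons.IH by (simp add: proots_mult del: mult_pCons_left)
qed simp

section \<open>Sums of exponentials\<close>

lemma exp_minus_self_mono:
  fixes r t :: real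
  assumes "0 \<le> r" "r \<le> t"
  shows "exp r - r \<le> exp t - t"
proof -
  have "t - r \<le> exp (t - r) - 1" using exp_ge_add_one_self[of "t - r"] by linarith
  also have "\<dots> \<le> exp r * (exp (t - r) - 1)"
    using mult_right_mono[of 1 "exp r" "exp (t - r) - 1"] assms by simp
  also have "\<dots> = exp t - exp r" by (simp add: algebra_simps flip: exp_add)
  finally show ?thesis by simp
qed

lemma sum_exp_gt_of_sum_zero:
  fixes \<mu> :: "'i \<Rightarrow> real"
  assumes I: "finite I" "k \<in> I" and sum0: "(\<Sum>i\<in>I. \<mu> i) = 0"
    and r: "0 < r" "r \<le> \<mu> k"
  shows "exp r + (real (card I) - 1) - r < (\<Sum>i\<in>I. exp (\<mu> i))"
proof -
  let ?J = "I - {k}"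
  have sumJ: "(\<Sum>i\<in>?J. \<mu> i) = - \<mu> k" using sum0 I by (simp add: sum_diff1)
  have "\<exists>i\<in>?J. \<mu> i \<noteq> 0"
  proof (rule ccontr)
    assume "\<not> (\<exists>i\<in>?J. \<mu> i \<noteq> 0)"
    then have "(\<Sum>i\<in>?J. \<mu> i) = 0" by simp
    then show False using sumJ r by simp
  qed
  then obtain i where i: "i \<in> ?J" "\<mu> i \<noteq> 0" by blast
  have "card I = Suc (card ?J)" using card_Suc_Diff1[OF I] by simp
  then have "real (card I) - 1 - \<mu> k = (\<Sum>i\<in>?J. 1 + \<mu> i)"
    using sumJ by (simp add: sum.distrib)
  also have "\<dots> < (\<Sum>i\<in>?J. exp (\<mu> i))"
    using I i exp_minus_greater[of "- \<mu> _"] exp_ge_add_one_self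
    by (intro sum_strict_mono_ex1) auto
  finally have "real (card I) - 1 - \<mu> k < (\<Sum>i\<in>?J. exp (\<mu> i))" .
  moreover have "exp r - r \<le> exp (\<mu> k) - \<mu> k" using r by (intro exp_minus_self_mono) auto
  moreover have "(\<Sum>i\<in>I. exp (\<mu> i)) = exp (\<mu> k) + (\<Sum>i\<in>?J. exp (\<mu> i))"
    using I by (simp add: sum.remove)
  ultimately show ?thesis by linarith
qed

section \<open>Adjacency matrices\<close>

lemma finite_edges: "finite (edges n E)"
  by (rule finite_subset[of _ "{..<n} \<times> {..<n}"]) (auto simp: edges_def)

lemma adj_matrix_entry: "i < n \<Longrightarrow> j < n \<Longrightarrow> adj_matrix n E $$ (i, j) = (if E i j then 1 else 0)"
  by (simp add: adj_matrix_def)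

lemma adj_matrix_carrier: "adj_matrix n E \<in> carrier_mat n n"
  by (simp add: adj_matrix_def)

lemma transpose_adj_matrix:
  assumes "simple_graph n E"
  shows "transpose_mat (adj_matrix n E) = adj_matrix n E"
  using assms by (auto intro!: eq_matI simp: adj_matrix_def simple_graph_def)

lemma trace_adj_matrix:
  assumes "simple_graph n E"
  shows "trace (adj_matrix n E) = 0"
proof -
  have "\<not> E i i" for i using assms unfolding simple_graph_def by blast
  then show ?thesis by (simp add: trace_def adj_matrix_def)
qed

lemma sum_adjacent_pairs:
  assumes G: "simple_graph n E" and f: "\<And>i j. f i j = f j i"
  shows "(\<Sum>i<n. \<Sum>j<n. if E i j then f i j else 0) = 2 * (\<Sum>(i, j)\<in>edges n E. f i j :: real)"
proof -
  have pairs: "{p \<in> {..<n} \<times> {..<n}. E (fst p) (snd p)} = edges n E \<union> prod.swap ` edges n E"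
    using G unfolding simple_graph_def edges_def
    by (auto simp: image_iff) (metis linorder_neqE_nat)
  have "(\<Sum>i<n. \<Sum>j<n. if E i j then f i j else 0)
      = (\<Sum>p\<in>{p \<in> {..<n} \<times> {..<n}. E (fst p) (snd p)}. f (fst p) (snd p))"
    by (simp add: sum.cartesian_product sum.inter_filter split_def)
  also have "\<dots> = (\<Sum>p\<in>edges n E. f (fst p) (snd p)) + (\<Sum>p\<in>prod.swap ` edges n E. f (fst p) (snd p))"
    unfolding pairs by (rule sum.union_disjoint) (use finite_edges[of n E] in \<open>auto simp: edges_def\<close>)
  also have "(\<Sum>p\<in>prod.swap ` edges n E. f (fst p) (snd p)) = (\<Sum>p\<in>edges n E. f (fst p) (snd p))"
    by (subst sum.reindex) (auto simp: f)
  finally show ?thesis by (simp add: split_def)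
qed

lemma degree_eq_sum: "real (degree n E i) = (\<Sum>j<n. if E i j then 1 else 0)"
  by (simp add: degree_def sum.If_cases Collect_conj_eq lessThan_def Int_commute)

lemma sum_degree:
  assumes "simple_graph n E"
  shows "(\<Sum>i<n. real (degree n E i)) = 2 * real (card (edges n E))"
  using sum_adjacent_pairs[OF assms, of "\<lambda>_ _. 1"] by (simp add: degree_eq_sum)

lemma quad_form_adj_matrix_sqrt_degree:
  assumes "simple_graph n E"
  shows "quad_form n (adj_matrix n E) (\<lambda>i. sqrt (degree n E i)) = 2 * randic_half n E"
proof -
  have "quad_form n (adj_matrix n E) (\<lambda>i. sqrt (degree n E i))
      = (\<Sum>i<n. \<Sum>j<n. if E i j then sqrt (real (degree n E i * degree n E j)) else 0)"
    unfolding quad_form_def by (intro sum.cong refl) (simp add: adj_matrix_entry real_sqrt_mult)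
  also have "\<dots> = 2 * randic_half n E"
    unfolding randic_half_def by (rule sum_adjacent_pairs[OF assms]) (simp add: mult.commute)
  finally show ?thesis .
qed

lemma randic_half_pos:
  assumes G: "simple_graph n E" and "edges n E \<noteq> {}"
  shows "0 < randic_half n E"
proof -
  have deg: "0 < degree n E i" if "E i j" for i j
    using G that by (auto simp: degree_def simple_graph_def card_gt_0_iff)
  have "0 < sqrt (real (degree n E i * degree n E j))" if "(i, j) \<in> edges n E" for i j
    using deg[of i j] deg[of j i] G that by (auto simp: edges_def simple_graph_def)
  then show ?thesis unfolding randic_half_def using finite_edges assms(2)
    by (intro sum_pos) auto
qed

lemma estrada_index_eq_sum_exp_nth:
  assumes "char_poly (adj_matrix n E) = (\<Prod>a\<leftarrow>es. [:-a, 1:])" "length es = n"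
  shows "estrada_index n E = (\<Sum>i<n. exp (es ! i))"
  using assms by (simp add: estrada_index_def adj_eigenvalues_def proots_prod_list_linear
      sum_mset_sum_list sum_list_sum_nth atLeast0LessThan flip: mset_map)

theorem mainTheorem3:
  fixes n :: nat and E :: "nat \<Rightarrow> nat \<Rightarrow> bool"
  assumes "simple_graph n E"
    and "card (edges n E) \<ge> 1"
  shows "estrada_index n E >
           exp (randic_half n E / real (card (edges n E))) + (real n - 1)
           - randic_half n E / real (card (edges n E))"
proof -
  let ?A = "adj_matrix n E" and ?m = "real (card (edges n E))"
  define r where "r = randic_half n E / ?m"
  define x where "x = (\<lambda>i. sqrt (real (degree n E i)))"
  have A: "?A \<in> carrier_mat n n" "transpose_mat ?A = ?A"
    using adj_matrix_carrier transpose_adj_matrix[OF assms(1)] by auto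
  obtain es where len: "length es = n" and cp: "char_poly ?A = (\<Prod>a\<leftarrow>es. [:-a, 1:])"
    using char_poly_real_symmetric_splits[OF A] .
  have trace0: "(\<Sum>i<n. es ! i) = 0"
    using trace_eq_sum_roots[OF A(1) cp len] trace_adj_matrix[OF assms(1)] by simp
  have norm_x: "(\<Sum>i<n. (x i)\<^sup>2) = 2 * ?m" using sum_degree[OF assms(1)] by (simp add: x_def)
  have "quad_form n ?A x = r * (\<Sum>i<n. (x i)\<^sup>2)"
    using quad_form_adj_matrix_sqrt_degree[OF assms(1)] norm_x assms(2)
    by (simp add: x_def r_def)
  moreover have "0 < (\<Sum>i<n. (x i)\<^sup>2)" using norm_x assms(2) by simp
  ultimately obtain k where k: "k < n" "r \<le> es ! k"
    using exists_eigenvalue_ge_rayleigh_quotient[OF A cp len] by blast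
  have "edges n E \<noteq> {}" using assms(2) by auto
  then have "0 < r" using randic_half_pos[OF assms(1)] assms(2) by (simp add: r_def)
  then have "exp r + (real n - 1) - r < (\<Sum>i<n. exp (es ! i))"
    using sum_exp_gt_of_sum_zero[of "{..<n}" k "\<lambda>i. es ! i"] k trace0 by simp
  then show ?thesis
    using estrada_index_eq_sum_exp_nth[OF cp len] by (simp add: r_def)
qed

end
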